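(* For $n\geq 1$, let $G_n$ be the graph with vertex set $\{0,1,\ldots,n\}$ in which, for each $i\in\{0,\ldots,n-1\}$, there are $2i+1$ parallel edges $e_{i,1},\ldots,e_{i,2i+1}$ between $i$ and $i+1$ (and no other edges). Let $0<a<b$ and let the resistances $r_{i,k}=r_{e_{i,k}}$ be independent, each distributed according to $\frac12\delta_a+\frac12\delta_b$. Then, as $n\to\infty$, $$\mathbb{E}\big(\mathcal{R}_r(0\leftrightarrow n)\big)=\Theta(\log n)\quad\text{and}\quad \operatorname{Var}\big(\mathcal{R}_r(0\leftrightarrow n)\big)=\Theta(1),$$ where $\mathcal{R}_r(0\leftrightarrow n)=\sum_{i=0}^{n-1}\Big(\sum_{k=1}^{2i+1}\frac{1}{r_{i,k}}\Big)^{-1}$ is the effective resistance between $0$ and $n$.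
   Context: $f(n)=\Theta(g(n))$ means there are constants $0<c\le C$ such that $c\,g(n)\le f(n)\le C\,g(n)$ for all large $n$. *)

theory Defs
  imports "HOL-Probability.Probability"
begin

text \<open>Edge set of G_n: edge e_{i,k} is encoded as the pair (i,k), 0 <= i < n, 1 <= k <= 2i+1.\<close>
definition edges :: "nat \<Rightarrow> (nat \<times> nat) set" where
  "edges n = {(i, k). i < n \<and> 1 \<le> k \<and> k \<le> 2 * i + 1}"

text \<open>Joint law of the i.i.d. resistances, each uniform on {a, b} (i.e. (delta_a + delta_b)/2 for a < b).
  Coordinates outside the edge set are fixed to 0 and never used.\<close>
definition resist_law :: "real \<Rightarrow> real \<Rightarrow> nat \<Rightarrow> (nat \<times> nat \<Rightarrow> real) pmf" where
  "resist_law a b n = Pi_pmf (edges n) 0 (\<lambda>_. pmf_of_set {a, b})"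

definition eff_res :: "nat \<Rightarrow> (nat \<times> nat \<Rightarrow> real) \<Rightarrow> real" where
  "eff_res n r = (\<Sum>i<n. inverse (\<Sum>k = 1..2 * i + 1. inverse (r (i, k))))"

definition bigTheta_seq :: "(nat \<Rightarrow> real) \<Rightarrow> (nat \<Rightarrow> real) \<Rightarrow> bool" where
  "bigTheta_seq f g \<longleftrightarrow> (\<exists>c C. 0 < c \<and> c \<le> C \<and>
     (\<forall>\<^sub>F n in at_top. c * g n \<le> f n \<and> f n \<le> C * g n))"

end

theory Submission
  imports Defs
begin

text \<open>The effective resistance is the sum over i < n of the parallel resistances of the
  bundles of 2i+1 edges. These depend on disjoint sets of independent resistances, so their
  expectations and variances add up. The parallel resistance of bundle i lies between a/(2i+1)
  and b/(2i+1), hence its expectation is of order 1/(i+1), giving the harmonic number H_n, i.e.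
  order ln n, in total; its variance is at most (b-a)^2/(2i+1)^2, which is summable. From below,
  the variance is at least that of the single resistor of bundle 0.\<close>

lemma expectation_pair_pmf_mult:
  fixes F :: "'a \<Rightarrow> real" and G :: "'b \<Rightarrow> real"
  assumes "finite (set_pmf p)" "finite (set_pmf q)"
  shows "measure_pmf.expectation (pair_pmf p q) (\<lambda>z. F (fst z) * G (snd z))
       = measure_pmf.expectation p F * measure_pmf.expectation q G"
proof -
  have "measure_pmf.expectation (pair_pmf p q) (\<lambda>z. F (fst z) * G (snd z))
      = (\<Sum>z\<in>set_pmf p \<times> set_pmf q. F (fst z) * G (snd z) * pmf (pair_pmf p q) z)"
    using assms by (intro integral_measure_pmf_real) auto
  also have "\<dots> = (\<Sum>x\<in>set_pmf p. \<Sum>y\<in>set_pmf q. (F x * pmf p x) * (G y * pmf q y))"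
    unfolding sum.cartesian_product by (intro sum.cong refl) (auto simp: pmf_pair)
  also have "\<dots> = (\<Sum>x\<in>set_pmf p. F x * pmf p x) * (\<Sum>y\<in>set_pmf q. G y * pmf q y)"
    by (simp add: sum_product)
  also have "\<dots> = measure_pmf.expectation p F * measure_pmf.expectation q G"
    using assms by (simp add: integral_measure_pmf_real)
  finally show ?thesis .
qed

lemma
  fixes F :: "'a \<Rightarrow> real" and G :: "'b \<Rightarrow> real"
  assumes fin_p: "finite (set_pmf p)" and fin_q: "finite (set_pmf q)"
  shows expectation_pair_pmf_add: "measure_pmf.expectation (pair_pmf p q) (\<lambda>z. F (fst z) + G (snd z))
           = measure_pmf.expectation p F + measure_pmf.expectation q G"
    and variance_pair_pmf_add: "measure_pmf.variance (pair_pmf p q) (\<lambda>z. F (fst z) + G (snd z))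
           = measure_pmf.variance p F + measure_pmf.variance q G"
proof -
  have int_pq: "integrable (measure_pmf (pair_pmf p q)) f" for f :: "'a \<times> 'b \<Rightarrow> real"
    using fin_p fin_q by (intro integrable_measure_pmf_finite) simp
  define mF where "mF = measure_pmf.expectation p F"
  define mG where "mG = measure_pmf.expectation q G"
  show E: "measure_pmf.expectation (pair_pmf p q) (\<lambda>z. F (fst z) + G (snd z)) = mF + mG"
    unfolding mF_def mG_def by (simp add: Bochner_Integration.integral_add int_pq)
  have centred: "measure_pmf.expectation p (\<lambda>x. F x - mF) = 0"
                "measure_pmf.expectation q (\<lambda>y. G y - mG) = 0"
    unfolding mF_def mG_def
    by (simp_all add: Bochner_Integration.integral_diff integrable_measure_pmf_finite fin_p fin_q)
  have "measure_pmf.variance (pair_pmf p q) (\<lambda>z. F (fst z) + G (snd z))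
      = measure_pmf.expectation (pair_pmf p q) (\<lambda>z. ((F (fst z) - mF)\<^sup>2 + (G (snd z) - mG)\<^sup>2)
           + 2 * ((F (fst z) - mF) * (G (snd z) - mG)))"
    unfolding E by (intro Bochner_Integration.integral_cong refl) (simp add: power2_eq_square algebra_simps)
  also have "\<dots> = measure_pmf.expectation (pair_pmf p q) (\<lambda>z. (F (fst z) - mF)\<^sup>2)
      + measure_pmf.expectation (pair_pmf p q) (\<lambda>z. (G (snd z) - mG)\<^sup>2)
      + 2 * measure_pmf.expectation (pair_pmf p q) (\<lambda>z. (F (fst z) - mF) * (G (snd z) - mG))"
    by (simp add: Bochner_Integration.integral_add int_pq)
  also have "\<dots> = measure_pmf.variance p F + measure_pmf.variance q G"
    using expectation_pair_pmf_mult[OF fin_p fin_q, of "\<lambda>x. F x - mF" "\<lambda>y. G y - mG"] centred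
      expectation_pair_pmf_fst[of p q "\<lambda>x. (F x - mF)\<^sup>2"]
      expectation_pair_pmf_snd[of p q "\<lambda>y. (G y - mG)\<^sup>2"]
    unfolding mF_def mG_def by simp
  finally show "measure_pmf.variance (pair_pmf p q) (\<lambda>z. F (fst z) + G (snd z))
           = measure_pmf.variance p F + measure_pmf.variance q G" .
qed

lemma finite_set_Pi_pmf:
  assumes "finite A" "\<And>x. x \<in> A \<Longrightarrow> finite (set_pmf (p x))"
  shows "finite (set_pmf (Pi_pmf A d p))"
  using assms by (auto simp: set_Pi_pmf)

lemma
  fixes F G :: "('a \<Rightarrow> 'b) \<Rightarrow> real"
  assumes fin: "finite A" "finite B" and disj: "A \<inter> B = {}"
    and fin_p: "\<And>x. finite (set_pmf (p x))"
    and F_local: "\<And>f g. (\<And>x. x \<in> A \<Longrightarrow> f x = g x) \<Longrightarrow> F f = F g"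
    and G_local: "\<And>f g. (\<And>x. x \<in> B \<Longrightarrow> f x = g x) \<Longrightarrow> G f = G g"
  shows expectation_Pi_pmf_union_add:
      "measure_pmf.expectation (Pi_pmf (A \<union> B) d p) (\<lambda>f. F f + G f)
         = measure_pmf.expectation (Pi_pmf A d p) F + measure_pmf.expectation (Pi_pmf B d p) G"
    and variance_Pi_pmf_union_add:
      "measure_pmf.variance (Pi_pmf (A \<union> B) d p) (\<lambda>f. F f + G f)
         = measure_pmf.variance (Pi_pmf A d p) F + measure_pmf.variance (Pi_pmf B d p) G"
proof -
  let ?merge = "\<lambda>(f, g) x. if x \<in> A then f x else g x"
  have law: "Pi_pmf (A \<union> B) d p = map_pmf ?merge (pair_pmf (Pi_pmf A d p) (Pi_pmf B d p))"
    by (rule Pi_pmf_union[OF fin disj])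
  have split: "F (?merge z) + G (?merge z) = F (fst z) + G (snd z)" for z
    using disj by (auto simp: case_prod_beta intro!: arg_cong2[where f = "(+)"] F_local G_local)
  have fin_Pi: "finite (set_pmf (Pi_pmf A d p))" "finite (set_pmf (Pi_pmf B d p))"
    using fin fin_p by (simp_all add: finite_set_Pi_pmf)
  show "measure_pmf.expectation (Pi_pmf (A \<union> B) d p) (\<lambda>f. F f + G f)
         = measure_pmf.expectation (Pi_pmf A d p) F + measure_pmf.expectation (Pi_pmf B d p) G"
    unfolding law integral_map_pmf split by (rule expectation_pair_pmf_add[OF fin_Pi])
  show "measure_pmf.variance (Pi_pmf (A \<union> B) d p) (\<lambda>f. F f + G f)
         = measure_pmf.variance (Pi_pmf A d p) F + measure_pmf.variance (Pi_pmf B d p) G"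
    unfolding law integral_map_pmf split by (rule variance_pair_pmf_add[OF fin_Pi])
qed

lemma
  fixes f :: "'a \<Rightarrow> real"
  assumes fin: "finite (set_pmf p)" and bounded: "\<And>x. x \<in> set_pmf p \<Longrightarrow> l \<le> f x \<and> f x \<le> u"
  shows expectation_pmf_ge: "l \<le> measure_pmf.expectation p f"
    and expectation_pmf_le: "measure_pmf.expectation p f \<le> u"
    and variance_pmf_le_range_sq: "measure_pmf.variance p f \<le> (u - l)\<^sup>2"
proof -
  note int = integrable_measure_pmf_finite[OF fin]
  show ge: "l \<le> measure_pmf.expectation p f"
    by (rule measure_pmf.integral_ge_const[OF int]) (auto intro!: AE_pmfI dest: bounded)
  show le: "measure_pmf.expectation p f \<le> u"
    by (rule measure_pmf.integral_le_const[OF int]) (auto intro!: AE_pmfI dest: bounded)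
  show "measure_pmf.variance p f \<le> (u - l)\<^sup>2"
  proof (rule measure_pmf.integral_le_const[OF int], rule AE_pmfI)
    fix x assume "x \<in> set_pmf p"
    then have "\<bar>f x - measure_pmf.expectation p f\<bar> \<le> \<bar>u - l\<bar>" using bounded ge le by fastforce
    then show "(f x - measure_pmf.expectation p f)\<^sup>2 \<le> (u - l)\<^sup>2" by (simp add: abs_le_square_iff)
  qed
qed

lemma
  fixes r :: "'a \<Rightarrow> real"
  assumes fin: "finite K" "K \<noteq> {}" and a_pos: "0 < a"
    and r_between: "\<And>k. k \<in> K \<Longrightarrow> a \<le> r k \<and> r k \<le> b"
  shows parallel_resistance_ge: "a / card K \<le> inverse (\<Sum>k\<in>K. inverse (r k))"
    and parallel_resistance_le: "inverse (\<Sum>k\<in>K. inverse (r k)) \<le> b / card K"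
proof -
  have card_pos: "0 < real (card K)" using fin by (simp add: card_gt_0_iff)
  have "card K / b = (\<Sum>k\<in>K. inverse b)" by (simp add: divide_inverse)
  also have "\<dots> \<le> (\<Sum>k\<in>K. inverse (r k))"
    using r_between a_pos by (intro sum_mono le_imp_inverse_le) force+
  finally have lower: "card K / b \<le> (\<Sum>k\<in>K. inverse (r k))" .
  have "(\<Sum>k\<in>K. inverse (r k)) \<le> (\<Sum>k\<in>K. inverse a)"
    using r_between a_pos by (intro sum_mono le_imp_inverse_le) auto
  also have "\<dots> = card K / a" by (simp add: divide_inverse)
  finally have upper: "(\<Sum>k\<in>K. inverse (r k)) \<le> card K / a" .
  have "b > 0" using r_between fin a_pos by fastforce
  then have "0 < card K / b" using card_pos by simp
  then show "inverse (\<Sum>k\<in>K. inverse (r k)) \<le> b / card K"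
    using le_imp_inverse_le[OF lower] by simp
  show "a / card K \<le> inverse (\<Sum>k\<in>K. inverse (r k))"
    using le_imp_inverse_le[OF upper] lower \<open>0 < card K / b\<close> by simp
qed

definition bundle_edges :: "nat \<Rightarrow> (nat \<times> nat) set" where
  "bundle_edges i = {i} \<times> {1..2 * i + 1}"

definition bundle_law :: "real \<Rightarrow> real \<Rightarrow> nat \<Rightarrow> (nat \<times> nat \<Rightarrow> real) pmf" where
  "bundle_law a b i = Pi_pmf (bundle_edges i) 0 (\<lambda>_. pmf_of_set {a, b})"

definition bundle_res :: "nat \<Rightarrow> (nat \<times> nat \<Rightarrow> real) \<Rightarrow> real" where
  "bundle_res i r = inverse (\<Sum>e\<in>bundle_edges i. inverse (r e))"

lemma finite_bundle_edges: "finite (bundle_edges i)"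
  by (simp add: bundle_edges_def)

lemma card_bundle_edges: "card (bundle_edges i) = 2 * i + 1"
  by (simp add: bundle_edges_def card_cartesian_product)

lemma finite_edges: "finite (edges n)"
  by (rule finite_subset[of _ "{..<n} \<times> {..2 * n + 1}"]) (auto simp: edges_def)

lemma edges_Suc: "edges (Suc n) = edges n \<union> bundle_edges n"
  by (auto simp: edges_def bundle_edges_def)

lemma edges_disjoint_bundle_edges: "edges n \<inter> bundle_edges n = {}"
  by (auto simp: edges_def bundle_edges_def)

lemma eff_res_eq_sum_bundle_res: "eff_res n r = (\<Sum>i<n. bundle_res i r)"
  unfolding eff_res_def bundle_res_def bundle_edges_def
  by (intro sum.cong refl arg_cong[where f = inverse]) (simp add: sum.cartesian_product')

lemma resist_law_0: "resist_law a b 0 = return_pmf (\<lambda>_. 0)"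
  by (simp add: resist_law_def edges_def)

lemma eff_res_Suc: "eff_res (Suc n) r = eff_res n r + bundle_res n r"
  by (simp add: eff_res_eq_sum_bundle_res)

lemma eff_res_cong: "(\<And>e. e \<in> edges n \<Longrightarrow> r e = r' e) \<Longrightarrow> eff_res n r = eff_res n r'"
  unfolding eff_res_def edges_def by (intro sum.cong refl arg_cong[where f = inverse]) auto

lemma bundle_res_cong:
  "(\<And>e. e \<in> bundle_edges i \<Longrightarrow> r e = r' e) \<Longrightarrow> bundle_res i r = bundle_res i r'"
  unfolding bundle_res_def by (intro sum.cong refl arg_cong[where f = inverse]) auto

lemma expectation_eff_res:
  "measure_pmf.expectation (resist_law a b n) (eff_res n)
     = (\<Sum>i<n. measure_pmf.expectation (bundle_law a b i) (bundle_res i))"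
proof (induction n)
  case 0
  show ?case by (simp add: resist_law_0 eff_res_def)
next
  case (Suc n)
  have "measure_pmf.expectation (resist_law a b (Suc n)) (eff_res (Suc n))
      = measure_pmf.expectation (resist_law a b n) (eff_res n)
        + measure_pmf.expectation (bundle_law a b n) (bundle_res n)"
    unfolding resist_law_def bundle_law_def edges_Suc eff_res_Suc
    by (rule expectation_Pi_pmf_union_add)
       (auto simp: finite_edges finite_bundle_edges edges_disjoint_bundle_edges
             intro: eff_res_cong bundle_res_cong)
  then show ?case by (simp add: Suc.IH)
qed

lemma variance_eff_res:
  "measure_pmf.variance (resist_law a b n) (eff_res n)
     = (\<Sum>i<n. measure_pmf.variance (bundle_law a b i) (bundle_res i))"
proof (induction n)
  case 0
  show ?case by (simp add: resist_law_0 eff_res_def)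
next
  case (Suc n)
  have "measure_pmf.variance (resist_law a b (Suc n)) (eff_res (Suc n))
      = measure_pmf.variance (resist_law a b n) (eff_res n)
        + measure_pmf.variance (bundle_law a b n) (bundle_res n)"
    unfolding resist_law_def bundle_law_def edges_Suc eff_res_Suc
    by (rule variance_Pi_pmf_union_add)
       (auto simp: finite_edges finite_bundle_edges edges_disjoint_bundle_edges
             intro: eff_res_cong bundle_res_cong)
  then show ?case by (simp add: Suc.IH)
qed

lemma finite_set_bundle_law: "finite (set_pmf (bundle_law a b i))"
  unfolding bundle_law_def by (rule finite_set_Pi_pmf[OF finite_bundle_edges]) simp

lemma bundle_res_between:
  assumes "0 < a" "a \<le> b" "r \<in> set_pmf (bundle_law a b i)"
  shows "a / (2 * real i + 1) \<le> bundle_res i r \<and> bundle_res i r \<le> b / (2 * real i + 1)"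
proof -
  have resistor_values: "r e \<in> {a, b}" if "e \<in> bundle_edges i" for e
    using assms(3) that finite_bundle_edges[of i]
    by (cases e) (auto simp: bundle_law_def set_Pi_pmf PiE_dflt_def)
  have between: "a \<le> r e \<and> r e \<le> b" if "e \<in> bundle_edges i" for e
    using resistor_values[OF that] assms(2) by auto
  have nonempty: "bundle_edges i \<noteq> {}" by (simp add: bundle_edges_def)
  show ?thesis
    using parallel_resistance_ge[of "bundle_edges i" a r b] parallel_resistance_le[of "bundle_edges i" a r b]
      finite_bundle_edges nonempty assms(1) between
    by (simp add: bundle_res_def card_bundle_edges add.commute)
qed

lemma variance_bundle_res_0:
  assumes "a \<noteq> b"
  shows "measure_pmf.variance (bundle_law a b 0) (bundle_res 0) = (b - a)\<^sup>2 / 4"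
proof -
  have single_resistor: "bundle_res 0 = (\<lambda>r. r (0, 1))"
    by (simp add: bundle_res_def bundle_edges_def fun_eq_iff)
  have marginal: "map_pmf (\<lambda>r. r (0, 1)) (bundle_law a b 0) = pmf_of_set {a, b}"
    unfolding bundle_law_def by (subst Pi_pmf_component) (auto simp: finite_bundle_edges bundle_edges_def)
  have "measure_pmf.variance (bundle_law a b 0) (\<lambda>r. r (0, 1))
      = measure_pmf.variance (map_pmf (\<lambda>r. r (0, 1)) (bundle_law a b 0)) (\<lambda>x. x)"
    by simp
  also have "\<dots> = (b - a)\<^sup>2 / 4"
    unfolding marginal using assms by (simp add: integral_pmf_of_set field_simps power2_eq_square)
  finally show ?thesis unfolding single_resistor .
qed

lemma bigTheta_seq_sandwich:
  assumes "0 < c" "c \<le> C" and between: "\<forall>\<^sub>F n in at_top. c * h n \<le> f n \<and> f n \<le> C * h n"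
    and "bigTheta_seq h g"
  shows "bigTheta_seq f g"
proof -
  obtain d D where "0 < d" "d \<le> D" and h_between: "\<forall>\<^sub>F n in at_top. d * g n \<le> h n \<and> h n \<le> D * g n"
    using \<open>bigTheta_seq h g\<close> unfolding bigTheta_seq_def by blast
  have "c * d \<le> C * D"
    using assms \<open>0 < d\<close> \<open>d \<le> D\<close> by (intro mult_mono) auto
  moreover have "\<forall>\<^sub>F n in at_top. c * d * g n \<le> f n \<and> f n \<le> C * D * g n"
    using between h_between
  proof eventually_elim
    case (elim n)
    have "c * (d * g n) \<le> c * h n" "C * h n \<le> C * (D * g n)"
      using elim assms by (auto intro: mult_left_mono)
    then show ?case using elim by (simp add: mult.assoc)
  qed
  ultimately show ?thesis
    unfolding bigTheta_seq_def using assms \<open>0 < d\<close> by (intro exI[of _ "c * d"] exI[of _ "C * D"]) auto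
qed

lemma harm_le_ln_plus_one:
  assumes "1 \<le> n"
  shows "harm n \<le> ln (real n) + 1"
proof -
  obtain k where n: "n = Suc k" using assms by (cases n) auto
  have "harm (Suc k) - ln (real (Suc k)) \<le> harm (Suc 0) - ln (real (Suc 0))"
    using decseq_harm_diff_ln by (rule decseqD) simp
  then show ?thesis by (simp add: n harm_def)
qed

lemma bigTheta_seq_harm_ln: "bigTheta_seq harm (\<lambda>n. ln (real n))"
  unfolding bigTheta_seq_def
proof (intro exI conjI)
  show "\<forall>\<^sub>F n in at_top. 1 * ln (real n) \<le> harm n \<and> harm n \<le> 2 * ln (real n)"
    using eventually_ge_at_top[of 3]
  proof eventually_elim
    case (elim n)
    have "exp 1 \<le> real n" using exp_le elim by linarith
    then have ln_ge_1: "1 \<le> ln (real n)"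
      using elim by (simp add: ln_ge_iff)
    have "ln (real n) \<le> ln (real n + 1)" using elim by simp
    also have "\<dots> \<le> harm n" by (rule ln_le_harm)
    finally show ?case using harm_le_ln_plus_one[of n] elim ln_ge_1 by simp
  qed
qed simp_all

lemma sum_inverse_odd_squares_le: "(\<Sum>i<n. 1 / (2 * real i + 1)\<^sup>2) \<le> 2"
proof -
  have "(\<Sum>i<n. 1 / (2 * real i + 1)\<^sup>2)
      \<le> (\<Sum>i<n. 2 / (2 * real i + 1) - 2 / (2 * real (Suc i) + 1))"
    by (intro sum_mono) (simp add: divide_simps power2_eq_square)
  also have "\<dots> = 2 - 2 / (2 * real n + 1)"
    by (subst sum_lessThan_telescope') simp
  also have "\<dots> \<le> 2" by simp
  finally show ?thesis .
qed

lemma expectation_eff_res_between_harm: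
  assumes "0 < a" "a \<le> b"
  shows "a / 2 * harm n \<le> measure_pmf.expectation (resist_law a b n) (eff_res n)
       \<and> measure_pmf.expectation (resist_law a b n) (eff_res n) \<le> b * harm n"
proof -
  define m where "m i = measure_pmf.expectation (bundle_law a b i) (bundle_res i)" for i
  have m_between: "a / (2 * real i + 1) \<le> m i \<and> m i \<le> b / (2 * real i + 1)" for i
    unfolding m_def using bundle_res_between[OF assms]
    by (intro conjI expectation_pmf_ge expectation_pmf_le finite_set_bundle_law) auto
  have "a / 2 * harm n = (\<Sum>i<n. a / (2 * real i + 2))"
    by (simp add: harm_altdef sum_distrib_left field_simps)
  also have "\<dots> \<le> (\<Sum>i<n. m i)"
    using m_between assms by (intro sum_mono order.trans[OF _ conjunct1[OF m_between]])
      (simp add: frac_le)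
  finally have lower: "a / 2 * harm n \<le> (\<Sum>i<n. m i)" .
  have "(\<Sum>i<n. m i) \<le> (\<Sum>i<n. b / (real i + 1))"
    using m_between assms by (intro sum_mono order.trans[OF conjunct2[OF m_between]])
      (simp add: frac_le)
  also have "\<dots> = b * harm n"
    by (simp add: harm_altdef sum_distrib_left field_simps)
  finally have upper: "(\<Sum>i<n. m i) \<le> b * harm n" .
  show ?thesis using lower upper by (simp add: expectation_eff_res m_def)
qed

lemma variance_eff_res_between:
  assumes "0 < a" "a < b" "1 \<le> n"
  shows "(b - a)\<^sup>2 / 4 \<le> measure_pmf.variance (resist_law a b n) (eff_res n)
       \<and> measure_pmf.variance (resist_law a b n) (eff_res n) \<le> 2 * (b - a)\<^sup>2"
proof -
  define v where "v i = measure_pmf.variance (bundle_law a b i) (bundle_res i)" for i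
  have v_le: "v i \<le> (b - a)\<^sup>2 * (1 / (2 * real i + 1)\<^sup>2)" for i
  proof -
    have "v i \<le> (b / (2 * real i + 1) - a / (2 * real i + 1))\<^sup>2"
      unfolding v_def using bundle_res_between[of a b] assms
      by (intro variance_pmf_le_range_sq finite_set_bundle_law) auto
    also have "\<dots> = (b - a)\<^sup>2 * (1 / (2 * real i + 1)\<^sup>2)"
      by (simp add: power_divide diff_divide_distrib[symmetric])
    finally show ?thesis .
  qed
  have "(b - a)\<^sup>2 / 4 = v 0"
    unfolding v_def using assms by (simp add: variance_bundle_res_0)
  also have "\<dots> \<le> (\<Sum>i<n. v i)"
    using assms unfolding v_def by (intro member_le_sum measure_pmf.variance_positive) auto
  finally have lower: "(b - a)\<^sup>2 / 4 \<le> (\<Sum>i<n. v i)" .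
  have "(\<Sum>i<n. v i) \<le> (b - a)\<^sup>2 * (\<Sum>i<n. 1 / (2 * real i + 1)\<^sup>2)"
    unfolding sum_distrib_left using v_le by (rule sum_mono)
  also have "\<dots> \<le> (b - a)\<^sup>2 * 2"
    by (intro mult_left_mono sum_inverse_odd_squares_le) simp
  finally have upper: "(\<Sum>i<n. v i) \<le> 2 * (b - a)\<^sup>2" by simp
  show ?thesis using lower upper by (simp add: variance_eff_res v_def)
qed

theorem proposition2:
  fixes a b :: real
  assumes "0 < a" and "a < b"
  shows "bigTheta_seq (\<lambda>n. measure_pmf.expectation (resist_law a b n) (eff_res n)) (\<lambda>n. ln (real n))
       \<and> bigTheta_seq (\<lambda>n. measure_pmf.variance (resist_law a b n) (eff_res n)) (\<lambda>n. 1)"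
proof
  show "bigTheta_seq (\<lambda>n. measure_pmf.expectation (resist_law a b n) (eff_res n)) (\<lambda>n. ln (real n))"
  proof (rule bigTheta_seq_sandwich[OF _ _ _ bigTheta_seq_harm_ln])
    show "\<forall>\<^sub>F n in at_top. a / 2 * harm n \<le> measure_pmf.expectation (resist_law a b n) (eff_res n)
        \<and> measure_pmf.expectation (resist_law a b n) (eff_res n) \<le> b * harm n"
      using expectation_eff_res_between_harm assms by (intro always_eventually) auto
  qed (use assms in auto)
  show "bigTheta_seq (\<lambda>n. measure_pmf.variance (resist_law a b n) (eff_res n)) (\<lambda>n. 1)"
    unfolding bigTheta_seq_def
  proof (intro exI conjI)
    show "\<forall>\<^sub>F n in at_top. (b - a)\<^sup>2 / 4 * 1 \<le> measure_pmf.variance (resist_law a b n) (eff_res n)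
        \<and> measure_pmf.variance (resist_law a b n) (eff_res n) \<le> 2 * (b - a)\<^sup>2 * 1"
      using eventually_ge_at_top[of 1]
      by eventually_elim (simp only: mult_1_right variance_eff_res_between[OF assms])
  qed (use assms in auto)
qed

end
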